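(* Let $A$ be an evolution algebra with natural basis $B=\{e_i:i\in\Lambda\}$, and let $J$ be a non-zero ideal of $A$ with support $\Lambda_J$. Then $I_1=\mathrm{lin}\{e_i^2:i\in\Lambda_J\cup D(\Lambda_J)\}$ and $I_2=\mathrm{lin}\{e_i:i\in\Lambda_J\cup D(\Lambda_J)\}$ are ideals of $A$ and $I_1\subseteq J\subseteq I_2$. Moreover, if $\dim A<\infty$ and $\det M_B(A)\neq0$, then $I_1=J=I_2$.
   Context: An evolution algebra is an algebra $A$ over $\mathbb{K}\in\{\mathbb{R},\mathbb{C}\}$ with a basis $\{e_i:i\in\Lambda\}$ (natural basis) with $e_ie_j=0$ for $i\neq j$; write $e_i^2=\sum_k\omega_{ki}e_k$ and $M_B(A)=(\omega_{ki})$. Support: $\Lambda_a=\{i:\alpha_i\neq0\}$ for $a=\sum\alpha_ie_i$, $\Lambda_S=\bigcup_{a\in S}\Lambda_a$. Descendents: $D^1(i)=\{j:\omega_{ji}\neq0\}$, $D^n(i)=\bigcup_{j\in D^{n-1}(i)}D^1(j)$, $D(i)=\bigcup_{n\ge1}D^n(i)$, $D(\Lambda_0)=\bigcup_{i\in\Lambda_0}D(i)$. *)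

theory Defs
  imports "HOL-Combinatorics.Permutations" Complex_Main
begin

text \<open>Elements are finitely supported coefficient functions 'i => 'k;
  the structure constants are w k i (= omega_{ki}), i.e. e_i^2 = sum_k w k i e_k.\<close>

definition evo_struct :: "('i \<Rightarrow> 'i \<Rightarrow> 'k::zero) \<Rightarrow> bool" where
  "evo_struct w \<longleftrightarrow> (\<forall>i. finite {k. w k i \<noteq> 0})"

definition supp :: "('i \<Rightarrow> 'k::zero) \<Rightarrow> 'i set" where
  "supp a = {i. a i \<noteq> 0}"

definition EA :: "('i \<Rightarrow> 'k::zero) set" where
  "EA = {a. finite (supp a)}"

definition ebasis :: "'i \<Rightarrow> 'i \<Rightarrow> 'k::{zero,one}" where
  "ebasis i = (\<lambda>j. if j = i then 1 else 0)"

definition eadd :: "('i \<Rightarrow> 'k::plus) \<Rightarrow> ('i \<Rightarrow> 'k) \<Rightarrow> 'i \<Rightarrow> 'k" where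
  "eadd a b = (\<lambda>i. a i + b i)"

definition escale :: "'k::times \<Rightarrow> ('i \<Rightarrow> 'k) \<Rightarrow> 'i \<Rightarrow> 'k" where
  "escale c a = (\<lambda>i. c * a i)"

definition emult :: "('i \<Rightarrow> 'i \<Rightarrow> 'k::comm_ring_1) \<Rightarrow> ('i \<Rightarrow> 'k) \<Rightarrow> ('i \<Rightarrow> 'k) \<Rightarrow> 'i \<Rightarrow> 'k" where
  "emult w a b = (\<lambda>k. \<Sum>i\<in>supp a. a i * b i * w k i)"

definition esq :: "('i \<Rightarrow> 'i \<Rightarrow> 'k::comm_ring_1) \<Rightarrow> 'i \<Rightarrow> 'i \<Rightarrow> 'k" where
  "esq w i = emult w (ebasis i) (ebasis i)"

definition is_ideal :: "('i \<Rightarrow> 'i \<Rightarrow> 'k::comm_ring_1) \<Rightarrow> ('i \<Rightarrow> 'k) set \<Rightarrow> bool" where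
  "is_ideal w J \<longleftrightarrow> J \<subseteq> EA \<and> (\<lambda>_. 0) \<in> J
     \<and> (\<forall>a\<in>J. \<forall>b\<in>J. eadd a b \<in> J)
     \<and> (\<forall>c. \<forall>a\<in>J. escale c a \<in> J)
     \<and> (\<forall>a\<in>EA. \<forall>x\<in>J. emult w a x \<in> J \<and> emult w x a \<in> J)"

definition lin :: "('i \<Rightarrow> 'k::comm_ring_1) set \<Rightarrow> ('i \<Rightarrow> 'k) set" where
  "lin S = {a. \<exists>F c. finite F \<and> F \<subseteq> S \<and> a = (\<lambda>k. \<Sum>v\<in>F. c v * v k)}"

definition supp_set :: "('i \<Rightarrow> 'k::zero) set \<Rightarrow> 'i set" where
  "supp_set S = (\<Union>a\<in>S. supp a)"

definition D1 :: "('i \<Rightarrow> 'i \<Rightarrow> 'k::zero) \<Rightarrow> 'i \<Rightarrow> 'i set" where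
  "D1 w i = {j. w j i \<noteq> 0}"

text \<open>descn w n i is D^(n+1)(i).\<close>
fun descn :: "('i \<Rightarrow> 'i \<Rightarrow> 'k::zero) \<Rightarrow> nat \<Rightarrow> 'i \<Rightarrow> 'i set" where
  "descn w 0 i = D1 w i"
| "descn w (Suc n) i = (\<Union>j\<in>descn w n i. D1 w j)"

definition desc :: "('i \<Rightarrow> 'i \<Rightarrow> 'k::zero) \<Rightarrow> 'i \<Rightarrow> 'i set" where
  "desc w i = (\<Union>n. descn w n i)"

definition desc_set :: "('i \<Rightarrow> 'i \<Rightarrow> 'k::zero) \<Rightarrow> 'i set \<Rightarrow> 'i set" where
  "desc_set w L = (\<Union>i\<in>L. desc w i)"

text \<open>Determinant of the structure matrix M_B(A) = (w k i) (Leibniz formula);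
  meaningful when the index type is finite.\<close>
definition struct_det :: "('i \<Rightarrow> 'i \<Rightarrow> 'k::comm_ring_1) \<Rightarrow> 'k" where
  "struct_det w = (\<Sum>p\<in>{p. p permutes (UNIV::'i set)}.
      of_int (sign p) * (\<Prod>k\<in>(UNIV::'i set). w k (p k)))"

end

theory Submission
  imports Defs "Jordan_Normal_Form.Determinant"
begin

text \<open>If \<open>i\<close> lies in the support of an ideal \<open>J\<close>, multiplying a suitable element of \<open>J\<close>
  by \<open>e\<^sub>i\<close> and rescaling shows \<open>e\<^sub>i\<^sup>2 \<in> J\<close>; since the support of \<open>e\<^sub>i\<^sup>2\<close> is \<open>D\<^sup>1(i)\<close>, the
  support \<open>\<Lambda>\<^sub>J\<close> is closed under descendents, so \<open>\<Lambda>\<^sub>J \<union> D(\<Lambda>\<^sub>J) = \<Lambda>\<^sub>J\<close>. Every product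
  \<open>a x\<close> with \<open>x\<close> supported in \<open>\<Lambda>\<^sub>J\<close> is a combination of the \<open>e\<^sub>i\<^sup>2\<close>, \<open>i \<in> \<Lambda>\<^sub>J\<close>, so every
  subspace between \<open>I\<^sub>1\<close> and \<open>I\<^sub>2\<close> is an ideal, and \<open>I\<^sub>1 \<subseteq> J \<subseteq> I\<^sub>2\<close>.
  If \<open>M\<^sub>B(A)\<close> is invertible, listing \<open>\<Lambda>\<^sub>J\<close> first makes \<open>M\<^sub>B(A)\<close> block upper triangular, so its
  \<open>\<Lambda>\<^sub>J \<times> \<Lambda>\<^sub>J\<close> block is invertible and each \<open>e\<^sub>j\<close>, \<open>j \<in> \<Lambda>\<^sub>J\<close>, lies in \<open>I\<^sub>1\<close>.\<close>

lemma lin_sum_mem: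
  assumes "finite I" "g ` I \<subseteq> S"
  shows "(\<lambda>k. \<Sum>i\<in>I. c i * g i k) \<in> lin S"
proof -
  define d where "d v = (\<Sum>i\<in>{i\<in>I. g i = v}. c i)" for v
  have "(\<Sum>i\<in>I. c i * g i k) = (\<Sum>v\<in>g ` I. d v * v k)" for k
    unfolding d_def sum_distrib_right sum.image_gen[OF assms(1), of "\<lambda>i. c i * g i k" g]
    by (intro sum.cong) auto
  then show ?thesis
    unfolding lin_def using assms by (intro CollectI exI[of _ "g ` I"] exI[of _ d]) auto
qed

lemma lin_zero: "(\<lambda>_. 0) \<in> lin S"
  using lin_sum_mem[of "{}"] by simp

lemma lin_escale:
  assumes "a \<in> lin S"
  shows "escale s a \<in> lin S"
proof -
  obtain F c where "finite F" "F \<subseteq> S" "a = (\<lambda>k. \<Sum>v\<in>F. c v * v k)"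
    using assms unfolding lin_def by blast
  then show ?thesis
    using lin_sum_mem[of F id S "\<lambda>v. s * c v"]
    by (simp add: escale_def sum_distrib_left mult.assoc)
qed

lemma lin_eadd:
  assumes "a \<in> lin S" "b \<in> lin S"
  shows "eadd a b \<in> lin S"
proof -
  obtain F c G d where FG: "finite F" "F \<subseteq> S" "a = (\<lambda>k. \<Sum>v\<in>F. c v * v k)"
    "finite G" "G \<subseteq> S" "b = (\<lambda>k. \<Sum>v\<in>G. d v * v k)"
    using assms unfolding lin_def by blast
  have "case_sum id id ` (F <+> G) \<subseteq> S"
    using FG by auto
  from lin_sum_mem[OF _ this, of "case_sum c d"] FG show ?thesis
    by (simp add: eadd_def sum.Plus comp_def)
qed

lemma lin_subset:
  assumes "(\<lambda>_. 0) \<in> X" "\<And>a b. a \<in> X \<Longrightarrow> b \<in> X \<Longrightarrow> eadd a b \<in> X"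
    "\<And>c a. a \<in> X \<Longrightarrow> escale c a \<in> X" "S \<subseteq> X"
  shows "lin S \<subseteq> X"
proof
  fix a assume "a \<in> lin S"
  then obtain F c where F: "finite F" "F \<subseteq> S" "a = (\<lambda>k. \<Sum>v\<in>F. c v * v k)"
    unfolding lin_def by blast
  have "(\<lambda>k. \<Sum>v\<in>F. c v * v k) \<in> X" using F(1,2)
  proof (induction F rule: finite_induct)
    case (insert v F)
    have "(\<lambda>k. \<Sum>v\<in>insert v F. c v * v k) = eadd (escale (c v) v) (\<lambda>k. \<Sum>v\<in>F. c v * v k)"
      using insert.hyps by (simp add: eadd_def escale_def)
    then show ?case using insert assms by auto
  qed (simp add: assms(1))
  then show "a \<in> X" using F(3) by simp
qed

definition EA_on :: "'i set \<Rightarrow> ('i \<Rightarrow> 'k::zero) set" where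
  "EA_on S = {a. finite (supp a) \<and> supp a \<subseteq> S}"

definition desc_closed :: "('i \<Rightarrow> 'i \<Rightarrow> 'k::zero) \<Rightarrow> 'i set \<Rightarrow> bool" where
  "desc_closed w S \<longleftrightarrow> (\<forall>i\<in>S. D1 w i \<subseteq> S)"

lemma desc_set_subset:
  assumes "desc_closed w S"
  shows "desc_set w S \<subseteq> S"
proof -
  have "descn w n i \<subseteq> S" if "i \<in> S" for n i
    using assms that by (induction n) (auto simp: desc_closed_def)
  then show ?thesis
    unfolding desc_set_def desc_def by blast
qed

lemma supp_ebasis [simp]: "supp (ebasis i :: 'i \<Rightarrow> 'k::zero_neq_one) = {i}"
  by (auto simp: supp_def ebasis_def)

lemma emult_ebasis_left: "emult w (ebasis i) a = (\<lambda>k. a i * w k i)"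
  unfolding emult_def supp_ebasis by (simp add: ebasis_def)

lemma esq_eq: "esq w i = (\<lambda>k. w k i)"
  unfolding esq_def emult_ebasis_left by (simp add: ebasis_def)

lemma supp_esq: "supp (esq w i) = D1 w i"
  by (simp add: esq_eq supp_def D1_def)

lemma emult_eq_sum_esq:
  fixes w :: "'i \<Rightarrow> 'i \<Rightarrow> 'k::comm_ring_1"
  assumes "finite (supp a)"
  shows "emult w a b = (\<lambda>k. \<Sum>i\<in>supp a \<inter> supp b. (a i * b i) * esq w i k)"
  unfolding emult_def esq_eq using assms unfolding supp_def
  by (intro ext sum.mono_neutral_right) auto

lemma emult_commute:
  "finite (supp a) \<Longrightarrow> finite (supp b) \<Longrightarrow> emult w a b = emult w b a"
  by (simp add: emult_eq_sum_esq Int_commute mult.commute)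

lemma EA_on_zero: "(\<lambda>_. 0 :: 'k::comm_ring_1) \<in> EA_on S"
  by (simp add: EA_on_def supp_def)

lemma EA_on_eadd:
  fixes a b :: "'i \<Rightarrow> 'k::comm_ring_1"
  assumes "a \<in> EA_on S" "b \<in> EA_on S"
  shows "eadd a b \<in> EA_on S"
proof -
  have "supp (eadd a b) \<subseteq> supp a \<union> supp b"
    by (auto simp: supp_def eadd_def)
  with assms show ?thesis
    unfolding EA_on_def by (blast intro: finite_subset)
qed

lemma EA_on_escale:
  fixes a :: "'i \<Rightarrow> 'k::comm_ring_1"
  assumes "a \<in> EA_on S"
  shows "escale c a \<in> EA_on S"
proof -
  have "supp (escale c a) \<subseteq> supp a"
    by (auto simp: supp_def escale_def)
  with assms show ?thesis
    unfolding EA_on_def by (blast intro: finite_subset)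
qed

lemma lin_ebasis_eq_EA_on:
  "lin {ebasis i | i. i \<in> S} = (EA_on S :: ('i \<Rightarrow> 'k::comm_ring_1) set)" (is "?L = ?R")
proof
  show "?L \<subseteq> ?R"
  proof (rule lin_subset)
    show "{ebasis i | i. i \<in> S} \<subseteq> ?R"
      by (auto simp: EA_on_def)
  qed (auto intro: EA_on_zero EA_on_eadd EA_on_escale)
  show "?R \<subseteq> ?L"
  proof
    fix x assume x: "x \<in> ?R"
    have "x k = (\<Sum>i\<in>supp x. x i * ebasis i k)" for k
    proof -
      have "(\<Sum>i\<in>supp x. x i * ebasis i k) = (\<Sum>i\<in>supp x. if i = k then x i else 0)"
        by (intro sum.cong) (auto simp: ebasis_def)
      also have "\<dots> = x k"
        using x by (simp add: EA_on_def supp_def)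
      finally show ?thesis ..
    qed
    then have "x = (\<lambda>k. \<Sum>i\<in>supp x. x i * ebasis i k)" ..
    also have "\<dots> \<in> lin {ebasis i | i. i \<in> S}"
      using x by (intro lin_sum_mem) (auto simp: EA_on_def)
    finally show "x \<in> ?L" .
  qed
qed

lemma lin_esq_subset_EA_on:
  fixes w :: "'i \<Rightarrow> 'i \<Rightarrow> 'k::comm_ring_1"
  assumes "evo_struct w" "desc_closed w S"
  shows "lin {esq w i | i. i \<in> S} \<subseteq> EA_on S"
proof (rule lin_subset)
  show "{esq w i | i. i \<in> S} \<subseteq> EA_on S"
  proof safe
    fix i assume "i \<in> S"
    then show "esq w i \<in> EA_on S"
      using assms unfolding evo_struct_def desc_closed_def by (simp add: EA_on_def supp_esq D1_def)
  qed
qed (auto intro: EA_on_zero EA_on_eadd EA_on_escale)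

lemma emult_EA_on_mem_lin_esq:
  assumes "a \<in> EA" "x \<in> EA_on S"
  shows "emult w a x \<in> lin {esq w i | i. i \<in> S}"
  using assms unfolding emult_eq_sum_esq[OF assms(1)[unfolded EA_def, simplified]]
  by (intro lin_sum_mem) (auto simp: EA_def EA_on_def)

lemma is_ideal_between_lin_esq_EA_on:
  fixes w :: "'i \<Rightarrow> 'i \<Rightarrow> 'k::comm_ring_1"
  assumes lower: "lin {esq w i | i. i \<in> S} \<subseteq> I" and upper: "I \<subseteq> EA_on S"
    and "(\<lambda>_. 0) \<in> I" "\<And>a b. a \<in> I \<Longrightarrow> b \<in> I \<Longrightarrow> eadd a b \<in> I"
    and "\<And>c a. a \<in> I \<Longrightarrow> escale c a \<in> I"
  shows "is_ideal w I"
proof -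
  have "emult w a x \<in> I \<and> emult w x a \<in> I" if "a \<in> EA" "x \<in> I" for a x
  proof -
    have x: "x \<in> EA_on S" using upper that(2) by blast
    then have "emult w x a = emult w a x"
      using that(1) by (intro emult_commute) (auto simp: EA_def EA_on_def)
    with emult_EA_on_mem_lin_esq[OF that(1) x] lower show ?thesis by auto
  qed
  moreover have "I \<subseteq> EA" using upper by (auto simp: EA_def EA_on_def)
  ultimately show ?thesis using assms(3-5) by (auto simp: is_ideal_def)
qed

lemma
  assumes "is_ideal w J"
  shows ideal_subset_EA: "J \<subseteq> EA"
    and ideal_zero: "(\<lambda>_. 0) \<in> J"
    and ideal_eadd: "a \<in> J \<Longrightarrow> b \<in> J \<Longrightarrow> eadd a b \<in> J"
    and ideal_escale: "a \<in> J \<Longrightarrow> escale c a \<in> J"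
    and ideal_emult_left: "a \<in> EA \<Longrightarrow> x \<in> J \<Longrightarrow> emult w a x \<in> J"
  using assms unfolding is_ideal_def by blast+

lemma ideal_esq_mem:
  fixes w :: "'i \<Rightarrow> 'i \<Rightarrow> 'k::field"
  assumes J: "is_ideal w J" and i: "i \<in> supp_set J"
  shows "esq w i \<in> J"
proof -
  obtain a where a: "a \<in> J" "a i \<noteq> 0"
    using i unfolding supp_set_def supp_def by blast
  have "ebasis i \<in> (EA :: ('i \<Rightarrow> 'k) set)"
    by (simp add: EA_def)
  with J a have "escale (inverse (a i)) (emult w (ebasis i) a) \<in> J"
    by (intro ideal_escale ideal_emult_left)
  also have "escale (inverse (a i)) (emult w (ebasis i) a) = esq w i"
    using a by (simp add: escale_def emult_ebasis_left esq_eq mult.assoc[symmetric])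
  finally show ?thesis .
qed

lemma desc_closed_supp_set_ideal:
  fixes w :: "'i \<Rightarrow> 'i \<Rightarrow> 'k::field"
  assumes "is_ideal w J"
  shows "desc_closed w (supp_set J)"
  unfolding desc_closed_def
proof
  fix i assume "i \<in> supp_set J"
  then have "esq w i \<in> J" by (rule ideal_esq_mem[OF assms])
  then show "D1 w i \<subseteq> supp_set J"
    unfolding supp_esq[symmetric] supp_set_def by blast
qed

lemma ideal_subset_EA_on_supp_set: "is_ideal w J \<Longrightarrow> J \<subseteq> EA_on (supp_set J)"
  using ideal_subset_EA unfolding EA_def EA_on_def supp_set_def by blast

lemma lin_esq_supp_set_subset_ideal:
  fixes w :: "'i \<Rightarrow> 'i \<Rightarrow> 'k::field"
  assumes "is_ideal w J"
  shows "lin {esq w i | i. i \<in> supp_set J} \<subseteq> J"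
  using assms ideal_esq_mem[OF assms]
  by (intro lin_subset) (auto intro: ideal_zero ideal_eadd ideal_escale)

lemma bij_betw_map_permutation:
  assumes f: "bij_betw f A B"
  shows "bij_betw (map_permutation A f) {p. p permutes A} {p. p permutes B}"
proof (rule bij_betw_byWitness[where f' = "map_permutation B (inv_into A f)"])
  have g: "bij_betw (inv_into A f) B A"
    using f by (rule bij_betw_inv_into)
  show "\<forall>p\<in>{p. p permutes A}. map_permutation B (inv_into A f) (map_permutation A f p) = p"
    using f by (auto intro!: map_permutation_compose_inv simp: bij_betw_inv_into_left)
  show "\<forall>p\<in>{p. p permutes B}. map_permutation A f (map_permutation B (inv_into A f) p) = p"
    using g f by (auto intro!: map_permutation_compose_inv simp: bij_betw_inv_into_right)
  show "map_permutation A f ` {p. p permutes A} \<subseteq> {p. p permutes B}"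
    using f by (auto intro: map_permutation_permutes)
  show "map_permutation B (inv_into A f) ` {p. p permutes B} \<subseteq> {p. p permutes A}"
    using g by (auto intro: map_permutation_permutes)
qed

lemma det_mat_enum_eq_struct_det:
  fixes w :: "'i \<Rightarrow> 'i \<Rightarrow> 'k::comm_ring_1"
  assumes "distinct zs" "set zs = UNIV"
  shows "det (mat (length zs) (length zs) (\<lambda>(r, c). w (zs ! r) (zs ! c))) = struct_det w"
proof -
  define n where "n = length zs"
  have f: "bij_betw ((!) zs) {0..<n} UNIV"
    using assms by (intro bij_betw_nth) (auto simp: n_def)
  then have inj: "inj_on ((!) zs) {0..<n}"
    by (rule bij_betw_imp_inj_on)
  let ?P = "map_permutation {0..<n} ((!) zs)"
  have term_eq: "of_int (sign q) * (\<Prod>r = 0..<n. w (zs ! r) (zs ! q r))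
      = of_int (sign (?P q)) * (\<Prod>k\<in>UNIV. w k (?P q k))" if q: "q permutes {0..<n}" for q
  proof -
    have "(\<Prod>k\<in>UNIV. w k (?P q k)) = (\<Prod>r = 0..<n. w (zs ! r) (?P q (zs ! r)))"
      using prod.reindex_bij_betw[OF f, of "\<lambda>k. w k (?P q k)"] by simp
    also have "\<dots> = (\<Prod>r = 0..<n. w (zs ! r) (zs ! q r))"
      using inj by (intro prod.cong) (simp_all add: map_permutation_apply)
    finally show ?thesis
      using sign_map_permutation[OF inj q] by simp
  qed
  have "det (mat n n (\<lambda>(r, c). w (zs ! r) (zs ! c)))
      = (\<Sum>q | q permutes {0..<n}. of_int (sign q) * (\<Prod>r = 0..<n. w (zs ! r) (zs ! q r)))"
    by (subst det_def'[of _ n]) (auto intro!: sum.cong prod.cong dest: permutes_in_image)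
  also have "\<dots> = (\<Sum>q | q permutes {0..<n}. of_int (sign (?P q)) * (\<Prod>k\<in>UNIV. w k (?P q k)))"
    using term_eq by (intro sum.cong) auto
  also have "\<dots> = struct_det w"
    unfolding struct_det_def using sum.reindex_bij_betw[OF bij_betw_map_permutation[OF f]] by simp
  finally show ?thesis by (simp add: n_def)
qed

lemma det_desc_closed_block_nonzero:
  fixes w :: "'i \<Rightarrow> 'i \<Rightarrow> 'k::idom"
  assumes fin: "finite (UNIV :: 'i set)" and det: "struct_det w \<noteq> 0"
    and closed: "desc_closed w S" and xs: "distinct xs" "set xs = S"
  shows "det (mat (length xs) (length xs) (\<lambda>(r, c). w (xs ! r) (xs ! c))) \<noteq> 0"
proof -
  obtain ys where ys: "distinct ys" "set ys = - S"
    using finite_distinct_list[OF finite_subset[OF subset_UNIV fin]] by blast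
  define m l where "m = length xs" and "l = length ys"
  define zs where "zs = xs @ ys"
  have zs: "distinct zs" "set zs = UNIV" "length zs = m + l"
    using xs ys by (auto simp: zs_def m_def l_def)
  define A1 where "A1 = mat m m (\<lambda>(r, c). w (xs ! r) (xs ! c))"
  define A2 where "A2 = mat m l (\<lambda>(r, c). w (xs ! r) (ys ! c))"
  define A4 where "A4 = mat l l (\<lambda>(r, c). w (ys ! r) (ys ! c))"
  have zero: "w (ys ! r) (xs ! c) = 0" if "r < l" "c < m" for r c
    using closed nth_mem[of r ys] nth_mem[of c xs] that xs ys
    by (auto simp: desc_closed_def D1_def m_def l_def)
  have "mat (m + l) (m + l) (\<lambda>(r, c). w (zs ! r) (zs ! c)) = four_block_mat A1 A2 (0\<^sub>m l m) A4"
    by (rule eq_matI) (auto simp: A1_def A2_def A4_def zs_def nth_append m_def[symmetric] zero)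
  moreover have "det (four_block_mat A1 A2 (0\<^sub>m l m) A4) = det A1 * det A4"
    unfolding A1_def A2_def A4_def by (rule det_four_block_mat_lower_left_zero) auto
  ultimately have "struct_det w = det A1 * det A4"
    using det_mat_enum_eq_struct_det[OF zs(1,2), of w] zs(3) by simp
  with det show ?thesis
    by (simp add: A1_def m_def)
qed

lemma exists_solution_unit_vec:
  fixes A :: "'a::field mat"
  assumes A: "A \<in> carrier_mat m m" and det: "det A \<noteq> 0" and j: "j < m"
  shows "\<exists>x. \<forall>r<m. (\<Sum>c = 0..<m. A $$ (r, c) * x c) = (if r = j then 1 else 0)"
proof (intro exI allI impI)
  fix r assume r: "r < m"
  have "(\<Sum>c = 0..<m. A $$ (r, c) * adj_mat A $$ (c, j)) = (A * adj_mat A) $$ (r, j)"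
    using A adj_mat(1)[OF A] r j by (simp add: scalar_prod_def)
  also have "\<dots> = (if r = j then det A else 0)"
    using adj_mat(2)[OF A] r j by simp
  finally show "(\<Sum>c = 0..<m. A $$ (r, c) * (adj_mat A $$ (c, j) / det A)) = (if r = j then 1 else 0)"
    using det by (simp add: sum_divide_distrib[symmetric] mult.assoc[symmetric] times_divide_eq_right)
qed

lemma ebasis_mem_lin_esq:
  fixes w :: "'i \<Rightarrow> 'i \<Rightarrow> 'k::field"
  assumes fin: "finite (UNIV :: 'i set)" and det: "struct_det w \<noteq> 0"
    and closed: "desc_closed w S" and j: "j \<in> S"
  shows "ebasis j \<in> lin {esq w i | i. i \<in> S}"
proof -
  obtain xs where xs: "distinct xs" "set xs = S"
    using finite_distinct_list[OF finite_subset[OF subset_UNIV fin]] by blast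
  define m where "m = length xs"
  obtain j0 where j0: "j0 < m" "xs ! j0 = j"
    using j xs by (auto simp: in_set_conv_nth m_def)
  obtain x where x: "\<forall>r<m. (\<Sum>c = 0..<m. w (xs ! r) (xs ! c) * x c) = (if r = j0 then 1 else 0)"
    using exists_solution_unit_vec[OF _ det_desc_closed_block_nonzero[OF fin det closed xs] j0(1)[unfolded m_def]]
    by (auto simp: m_def)
  have "ebasis j k = (\<Sum>c = 0..<m. x c * esq w (xs ! c) k)" for k
  proof (cases "k \<in> S")
    case True
    then obtain r where r: "r < m" "xs ! r = k"
      using xs by (auto simp: in_set_conv_nth m_def)
    then show ?thesis
      using x j0 xs(1) by (auto simp: ebasis_def esq_eq mult.commute nth_eq_iff_index_eq m_def)
  next
    case False
    have "w k (xs ! c) = 0" if "c < m" for c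
      using closed False nth_mem[of c xs] that xs by (auto simp: desc_closed_def D1_def m_def)
    then show ?thesis
      using False j by (auto simp: ebasis_def esq_eq)
  qed
  then have "ebasis j = (\<lambda>k. \<Sum>c = 0..<m. x c * esq w (xs ! c) k)" ..
  also have "\<dots> \<in> lin {esq w i | i. i \<in> S}"
    using xs by (intro lin_sum_mem) (auto simp: m_def)
  finally show ?thesis .
qed

lemma EA_on_subset_lin_esq:
  fixes w :: "'i \<Rightarrow> 'i \<Rightarrow> 'k::field"
  assumes "finite (UNIV :: 'i set)" "struct_det w \<noteq> 0" "desc_closed w S"
  shows "EA_on S \<subseteq> lin {esq w i | i. i \<in> S}"
  unfolding lin_ebasis_eq_EA_on[symmetric]
  using ebasis_mem_lin_esq[OF assms] by (intro lin_subset) (auto intro: lin_zero lin_eadd lin_escale)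

theorem proposition5p6:
  fixes w :: "'i \<Rightarrow> 'i \<Rightarrow> 'k::real_normed_field"
    and J :: "('i \<Rightarrow> 'k) set"
  assumes "evo_struct w"
    and "is_ideal w J"
    and "\<exists>a\<in>J. a \<noteq> (\<lambda>_. 0)"
  defines "L \<equiv> supp_set J \<union> desc_set w (supp_set J)"
  defines "I1 \<equiv> lin {esq w i | i. i \<in> L}"
  defines "I2 \<equiv> lin {ebasis i | i. i \<in> L}"
  shows "is_ideal w I1 \<and> is_ideal w I2 \<and> I1 \<subseteq> J \<and> J \<subseteq> I2
         \<and> ((finite (UNIV::'i set) \<and> struct_det w \<noteq> 0) \<longrightarrow> I1 = J \<and> J = I2)"
proof -
  define S where "S = supp_set J"
  have closed: "desc_closed w S"
    unfolding S_def using assms(2) by (rule desc_closed_supp_set_ideal)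
  have L: "L = S"
    using desc_set_subset[OF closed] by (auto simp: L_def S_def)
  have I1_sub: "I1 \<subseteq> EA_on S"
    unfolding I1_def L using assms(1) closed by (rule lin_esq_subset_EA_on)
  have I2: "I2 = EA_on S"
    unfolding I2_def L by (rule lin_ebasis_eq_EA_on)
  have "is_ideal w I1"
    using I1_sub unfolding I1_def L
    by (intro is_ideal_between_lin_esq_EA_on) (auto intro: lin_zero lin_eadd lin_escale)
  moreover have "is_ideal w I2"
    using I1_sub unfolding I2 I1_def L
    by (intro is_ideal_between_lin_esq_EA_on) (auto intro: EA_on_zero EA_on_eadd EA_on_escale)
  moreover have "I1 \<subseteq> J"
    unfolding I1_def L S_def using assms(2) by (rule lin_esq_supp_set_subset_ideal)
  moreover have "J \<subseteq> I2"
    unfolding I2 S_def using assms(2) by (rule ideal_subset_EA_on_supp_set)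
  moreover have "I2 \<subseteq> I1" if "finite (UNIV :: 'i set)" "struct_det w \<noteq> 0"
    unfolding I2 I1_def L using that closed by (rule EA_on_subset_lin_esq)
  ultimately show ?thesis by blast
qed

end
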